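(* Let $N\ge 1$ be an integer, let $\gamma>0$, $\upsilon\in(0,1]$, $P_b>0$, $h>0$, $T>0$, and let $p_1>p_2>\cdots>p_N>0$ with $p_1\le 1$. Consider Problem P1: minimize $\sum_{k=1}^N \gamma p_k f_k^2$ over $(f_1,\dots,f_N)$ subject to $\sum_{k=1}^m \gamma f_k^2 \le \upsilon P_b h \sum_{k=1}^m \frac{1}{f_k}$ for $m=1,\dots,N$, $\sum_{k=1}^N \frac{1}{f_k}\le T$, and $f_k>0$ for all $k$; Problem P2: minimize $\sum_{k=1}^N \gamma p_k f_k^2$ over $(f_1,\dots,f_N,y_1,\dots,y_N)$ subject to $\sum_{k=1}^m \gamma f_k^2 \le \upsilon P_b h \sum_{k=1}^m y_k$ for $m=1,\dots,N$, $\sum_{k=1}^N y_k\le T$, and $f_k>0$, $\frac{1}{f_k}-y_k\le 0$ for all $k$. Then the solution of Problem P2 also solves Problem P1: if $(\{f_k^*\},\{y_k^*\})$ is an optimal solution of P2, then $y_k^*=1/f_k^*$ for all $k$ and $(f_1^*,\dots,f_N^* )$ is an optimal solution of P1.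
   Context: Model: $f_k$ is the CPU frequency of the $k$-th CPU cycle of a mobile device, $p_k$ is the probability that the $k$-th cycle is executed (the sequence is decreasing in $k$), $\gamma f^2$ is the energy consumed by one cycle at frequency $f$, $\upsilon P_b h$ is the harvested power, and $T$ is the deadline. P2 is obtained from P1 by substituting $y_k=1/f_k$ and relaxing $y_kf_k=1$ to $y_kf_k\ge 1$. *)

theory Defs
  imports "HOL-Analysis.Analysis"
begin

text \<open>Vectors (f_1..f_N), (y_1..y_N) are functions nat => real; only indices 1..N matter.\<close>

definition obj :: "nat \<Rightarrow> real \<Rightarrow> (nat \<Rightarrow> real) \<Rightarrow> (nat \<Rightarrow> real) \<Rightarrow> real" where
  "obj N \<gamma> p f = (\<Sum>k=1..N. \<gamma> * p k * (f k)^2)"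

definition feasible_P1 :: "nat \<Rightarrow> real \<Rightarrow> real \<Rightarrow> real \<Rightarrow> real \<Rightarrow> real \<Rightarrow> (nat \<Rightarrow> real) \<Rightarrow> bool" where
  "feasible_P1 N \<gamma> \<upsilon> Pb h T f \<longleftrightarrow>
     (\<forall>m\<in>{1..N}. (\<Sum>k=1..m. \<gamma> * (f k)^2) \<le> \<upsilon> * Pb * h * (\<Sum>k=1..m. 1 / f k)) \<and>
     (\<Sum>k=1..N. 1 / f k) \<le> T \<and>
     (\<forall>k\<in>{1..N}. f k > 0)"

definition optimal_P1 :: "nat \<Rightarrow> real \<Rightarrow> real \<Rightarrow> real \<Rightarrow> real \<Rightarrow> real \<Rightarrow> (nat \<Rightarrow> real) \<Rightarrow> (nat \<Rightarrow> real) \<Rightarrow> bool" where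
  "optimal_P1 N \<gamma> \<upsilon> Pb h T p f \<longleftrightarrow>
     feasible_P1 N \<gamma> \<upsilon> Pb h T f \<and>
     (\<forall>g. feasible_P1 N \<gamma> \<upsilon> Pb h T g \<longrightarrow> obj N \<gamma> p f \<le> obj N \<gamma> p g)"

definition feasible_P2 :: "nat \<Rightarrow> real \<Rightarrow> real \<Rightarrow> real \<Rightarrow> real \<Rightarrow> real \<Rightarrow> (nat \<Rightarrow> real) \<Rightarrow> (nat \<Rightarrow> real) \<Rightarrow> bool" where
  "feasible_P2 N \<gamma> \<upsilon> Pb h T f y \<longleftrightarrow>
     (\<forall>m\<in>{1..N}. (\<Sum>k=1..m. \<gamma> * (f k)^2) \<le> \<upsilon> * Pb * h * (\<Sum>k=1..m. y k)) \<and>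
     (\<Sum>k=1..N. y k) \<le> T \<and>
     (\<forall>k\<in>{1..N}. f k > 0 \<and> 1 / f k - y k \<le> 0)"

definition optimal_P2 :: "nat \<Rightarrow> real \<Rightarrow> real \<Rightarrow> real \<Rightarrow> real \<Rightarrow> real \<Rightarrow> (nat \<Rightarrow> real) \<Rightarrow> (nat \<Rightarrow> real) \<Rightarrow> (nat \<Rightarrow> real) \<Rightarrow> bool" where
  "optimal_P2 N \<gamma> \<upsilon> Pb h T p f y \<longleftrightarrow>
     feasible_P2 N \<gamma> \<upsilon> Pb h T f y \<and>
     (\<forall>g z. feasible_P2 N \<gamma> \<upsilon> Pb h T g z \<longrightarrow> obj N \<gamma> p f \<le> obj N \<gamma> p g)"

end

theory Submission
  imports Defs
begin

text \<open>Every P1-feasible f yields the P2-feasible point (f, 1/f), so P2 is a relaxation of P1.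
  Conversely, if some constraint y_k \<ge> 1/f_k were slack at an optimum of P2, lowering f_k to
  1/y_k would keep all constraints of P2 (the energy sums only decrease) while strictly lowering
  the objective, because p_k > 0. Hence y = 1/f at the optimum, f is feasible for P1, and its
  value is a lower bound for every P1-feasible point.\<close>

lemma strict_decreasing_ge_last:
  fixes p :: "nat \<Rightarrow> 'a::order"
  assumes "\<And>k. 1 \<le> k \<Longrightarrow> k < N \<Longrightarrow> p k > p (Suc k)" and "k \<in> {1..N}"
  shows "p k \<ge> p N"
proof -
  have "k \<le> N" using assms(2) by simp
  then show ?thesis
  proof (induction k rule: inc_induct)
    case (step n)
    with assms show ?case by (metis atLeastAtMost_iff le_less_trans less_imp_le order_trans)
  qed simp
qed

lemma feasible_P2_inverse_of_feasible_P1: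
  "feasible_P1 N \<gamma> \<upsilon> Pb h T g \<Longrightarrow> feasible_P2 N \<gamma> \<upsilon> Pb h T g (\<lambda>k. 1 / g k)"
  unfolding feasible_P1_def feasible_P2_def by auto

lemma feasible_P1_of_feasible_P2_tight:
  assumes "feasible_P2 N \<gamma> \<upsilon> Pb h T f y" and "\<forall>k\<in>{1..N}. y k = 1 / f k"
  shows "feasible_P1 N \<gamma> \<upsilon> Pb h T f"
proof -
  have "(\<Sum>k=1..m. y k) = (\<Sum>k=1..m. 1 / f k)" if "m \<le> N" for m
    using assms(2) that by (intro sum.cong) auto
  then show ?thesis using assms(1) unfolding feasible_P1_def feasible_P2_def by auto
qed

lemma feasible_P2_tighten:
  assumes feas: "feasible_P2 N \<gamma> \<upsilon> Pb h T f y" and "\<gamma> \<ge> 0" and k: "k \<in> {1..N}"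
  shows "feasible_P2 N \<gamma> \<upsilon> Pb h T (f(k := 1 / y k)) y"
proof -
  let ?g = "f(k := 1 / y k)"
  have fk: "f k > 0" and yk: "1 / f k \<le> y k"
    using feas k unfolding feasible_P2_def by auto
  then have yk_pos: "y k > 0" by (meson less_le_trans zero_less_divide_1_iff)
  have "1 / y k \<le> f k" using yk fk yk_pos by (simp add: field_simps)
  then have "\<gamma> * (?g j)^2 \<le> \<gamma> * (f j)^2" for j
    using yk_pos \<open>\<gamma> \<ge> 0\<close> by (simp add: mult_left_mono power_mono)
  then have "(\<Sum>j=1..m. \<gamma> * (?g j)^2) \<le> (\<Sum>j=1..m. \<gamma> * (f j)^2)" for m
    by (rule sum_mono)
  with feas yk_pos show ?thesis
    unfolding feasible_P2_def by (fastforce intro: order_trans)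
qed

lemma obj_fun_upd_less:
  assumes "k \<in> {1..N}" and "\<gamma> > 0" and "p k > 0" and "0 \<le> c" and "c < f k"
  shows "obj N \<gamma> p (f(k := c)) < obj N \<gamma> p f"
  unfolding obj_def
proof (rule sum_strict_mono_ex1)
  have "c^2 < (f k)^2" using assms(4,5) by (simp add: power_strict_mono)
  then have less: "\<gamma> * p k * c^2 < \<gamma> * p k * (f k)^2" using assms(2,3) by simp
  then show "\<exists>j\<in>{1..N}. \<gamma> * p j * ((f(k := c)) j)^2 < \<gamma> * p j * (f j)^2"
    using assms(1) by auto
  show "\<forall>j\<in>{1..N}. \<gamma> * p j * ((f(k := c)) j)^2 \<le> \<gamma> * p j * (f j)^2"
    using less by simp
qed simp

theorem lemma1:
  fixes N :: nat and \<gamma> \<upsilon> Pb h T :: real and p f y :: "nat \<Rightarrow> real"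
  assumes "N \<ge> 1"
    and "\<gamma> > 0" and "0 < \<upsilon>" and "\<upsilon> \<le> 1" and "Pb > 0" and "h > 0" and "T > 0"
    and "\<And>k. 1 \<le> k \<Longrightarrow> k < N \<Longrightarrow> p k > p (Suc k)"
    and "p N > 0" and "p 1 \<le> 1"
    and "optimal_P2 N \<gamma> \<upsilon> Pb h T p f y"
  shows "(\<forall>k\<in>{1..N}. y k = 1 / f k) \<and> optimal_P1 N \<gamma> \<upsilon> Pb h T p f"
proof -
  have feas: "feasible_P2 N \<gamma> \<upsilon> Pb h T f y"
    and opt: "\<And>g z. feasible_P2 N \<gamma> \<upsilon> Pb h T g z \<Longrightarrow> obj N \<gamma> p f \<le> obj N \<gamma> p g"
    using assms(11) unfolding optimal_P2_def by auto
  have tight: "y k = 1 / f k" if k: "k \<in> {1..N}" for k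
  proof (rule ccontr)
    assume "y k \<noteq> 1 / f k"
    moreover have "f k > 0" and "1 / f k \<le> y k" using feas k unfolding feasible_P2_def by auto
    ultimately have "1 / f k < y k" by simp
    moreover have "0 < 1 / f k" using \<open>f k > 0\<close> by simp
    ultimately have "0 < y k" by linarith
    with \<open>1 / f k < y k\<close> \<open>f k > 0\<close> have "0 < 1 / y k" and "1 / y k < f k"
      by (simp_all add: field_simps)
    moreover have "p k > 0" using strict_decreasing_ge_last[of N p, OF assms(8) k] assms(9) by simp
    ultimately have "obj N \<gamma> p (f(k := 1 / y k)) < obj N \<gamma> p f"
      using obj_fun_upd_less[OF k assms(2)] by simp
    moreover have "obj N \<gamma> p f \<le> obj N \<gamma> p (f(k := 1 / y k))"
      using opt feasible_P2_tighten[OF feas _ k] assms(2) by simp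
    ultimately show False by simp
  qed
  have "feasible_P1 N \<gamma> \<upsilon> Pb h T f"
    using feasible_P1_of_feasible_P2_tight feas tight by blast
  then show ?thesis
    using tight opt feasible_P2_inverse_of_feasible_P1 unfolding optimal_P1_def by blast
qed

end
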